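(* Let $\Omega\subset\mathbb{R}^n$ be a bounded domain, let $S_1,S_2$ be disjoint compact subsets of $\overline\Omega$, and let $V_i\in L^1_{loc}(\Omega)\cap L^\infty_{loc}(\overline\Omega\setminus S_i)$, $i=1,2$. For a potential $W$ set $$\lambda_1(W):=\inf_{u\in C_0^\infty(\Omega)}\frac{\int_\Omega(|\nabla u|^2-Wu^2)dx}{\int_\Omega u^2dx}.$$ If $\lambda_1(V_1)>-\infty$ and $\lambda_1(V_2)>-\infty$, then $\lambda_1(V_1+V_2)>-\infty$. *)

theory Defs
  imports "HOL-Analysis.Analysis"
begin

fun iter_partial :: "'a::euclidean_space list \<Rightarrow> ('a \<Rightarrow> real) \<Rightarrow> 'a \<Rightarrow> real" where
  "iter_partial [] f = f"
| "iter_partial (b # bs) f = (\<lambda>x. frechet_derivative (iter_partial bs f) (at x) b)"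

definition smooth_fun :: "('a::euclidean_space \<Rightarrow> real) \<Rightarrow> bool" where
  "smooth_fun f \<longleftrightarrow> (\<forall>bs. set bs \<subseteq> Basis \<longrightarrow> (\<forall>x. iter_partial bs f differentiable (at x)))"

definition test_fun :: "'a::euclidean_space set \<Rightarrow> ('a \<Rightarrow> real) \<Rightarrow> bool" where
  "test_fun \<Omega> u \<longleftrightarrow> smooth_fun u \<and> compact (closure {x. u x \<noteq> 0}) \<and> closure {x. u x \<noteq> 0} \<subseteq> \<Omega>"

definition grad :: "('a::euclidean_space \<Rightarrow> real) \<Rightarrow> 'a \<Rightarrow> 'a" where
  "grad u x = (\<Sum>b\<in>Basis. frechet_derivative u (at x) b *\<^sub>R b)"

definition L1_loc :: "'a::euclidean_space set \<Rightarrow> ('a \<Rightarrow> real) \<Rightarrow> bool" where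
  "L1_loc \<Omega> V \<longleftrightarrow> (\<forall>K. compact K \<and> K \<subseteq> \<Omega> \<longrightarrow> set_integrable lebesgue K V)"

(* V (defined on \<Omega>) belongs to L^\<infinity>_loc(T): essentially bounded on \<Omega> near every point of T *)
definition Linf_loc_on :: "'a::euclidean_space set \<Rightarrow> 'a set \<Rightarrow> ('a \<Rightarrow> real) \<Rightarrow> bool" where
  "Linf_loc_on \<Omega> T V \<longleftrightarrow>
     (\<forall>x\<in>T. \<exists>e>0. \<exists>M. AE y in lebesgue. y \<in> ball x e \<inter> \<Omega> \<longrightarrow> \<bar>V y\<bar> \<le> M)"

definition lambda1 :: "'a::euclidean_space set \<Rightarrow> ('a \<Rightarrow> real) \<Rightarrow> ereal" where
  "lambda1 \<Omega> W = (INF u \<in> {u. test_fun \<Omega> u \<and> u \<noteq> (\<lambda>x. 0)}.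
      ereal ((LINT x:\<Omega>|lebesgue. (norm (grad u x))\<^sup>2 - W x * (u x)\<^sup>2) / (LINT x:\<Omega>|lebesgue. (u x)\<^sup>2)))"

end

theory Submission
  imports Defs "HOL-Computational_Algebra.Polynomial"
begin

text \<open>
  Choose a smooth pair \<open>c\<^sub>1, c\<^sub>2\<close> with \<open>c\<^sub>1\<^sup>2 + c\<^sub>2\<^sup>2 = 1\<close>, where \<open>c\<^sub>2\<close> vanishes near \<open>S\<^sub>1\<close> and
  \<open>c\<^sub>1\<close> vanishes near \<open>S\<^sub>2\<close>. The IMS localization formula
  \<open>|\<nabla>u|\<^sup>2 = |\<nabla>(c\<^sub>1u)|\<^sup>2 + |\<nabla>(c\<^sub>2u)|\<^sup>2 - (|\<nabla>c\<^sub>1|\<^sup>2 + |\<nabla>c\<^sub>2|\<^sup>2) u\<^sup>2\<close> splits the quadratic form of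
  \<open>V\<^sub>1 + V\<^sub>2\<close> at \<open>u\<close> into the form of \<open>V\<^sub>1\<close> at \<open>c\<^sub>1u\<close>, the form of \<open>V\<^sub>2\<close> at \<open>c\<^sub>2u\<close>, and an error
  \<open>(V\<^sub>1c\<^sub>2\<^sup>2 + V\<^sub>2c\<^sub>1\<^sup>2 + |\<nabla>c\<^sub>1|\<^sup>2 + |\<nabla>c\<^sub>2|\<^sup>2) u\<^sup>2\<close>. The first two are bounded below by the
  hypotheses on \<open>\<lambda>\<^sub>1(V\<^sub>i)\<close>; the error is bounded by a multiple of \<open>u\<^sup>2\<close>, because \<open>V\<^sub>1\<close> is essentially
  bounded away from \<open>S\<^sub>1\<close>, i.e.\ on the support of \<open>c\<^sub>2\<close> (and symmetrically), and \<open>\<Omega>\<close> is bounded.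
  The cutoffs are obtained by composing a polynomial that separates \<open>S\<^sub>1\<close> from \<open>S\<^sub>2\<close>
  (Stone--Weierstrass) with the smooth function \<open>exp (-1/t)\<close> and normalizing.
\<close>

section \<open>Smooth functions\<close>

definition partial_deriv :: "'a::euclidean_space \<Rightarrow> ('a \<Rightarrow> real) \<Rightarrow> 'a \<Rightarrow> real" where
  "partial_deriv b f = (\<lambda>x. frechet_derivative f (at x) b)"

lemma iter_partial_append_single:
  "iter_partial (bs @ [b]) f = iter_partial bs (partial_deriv b f)"
  by (induction bs) (auto simp: partial_deriv_def)

definition smooth_upto :: "nat \<Rightarrow> ('a::euclidean_space \<Rightarrow> real) \<Rightarrow> bool" where
  "smooth_upto n f \<longleftrightarrow>
     (\<forall>bs. set bs \<subseteq> Basis \<and> length bs \<le> n \<longrightarrow> (\<forall>x. iter_partial bs f differentiable (at x)))"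

lemma smooth_fun_iff_smooth_upto: "smooth_fun f \<longleftrightarrow> (\<forall>n. smooth_upto n f)"
  unfolding smooth_fun_def smooth_upto_def by auto

lemma smooth_upto_0: "smooth_upto 0 f \<longleftrightarrow> (\<forall>x. f differentiable (at x))"
  unfolding smooth_upto_def by auto

lemma smooth_upto_Suc:
  "smooth_upto (Suc n) f \<longleftrightarrow>
     (\<forall>x. f differentiable (at x)) \<and> (\<forall>b\<in>Basis. smooth_upto n (partial_deriv b f))"
proof
  assume f: "smooth_upto (Suc n) f"
  then have "\<forall>x. f differentiable (at x)"
    unfolding smooth_upto_def by (metis empty_subsetI iter_partial.simps(1) le0 list.set(1) list.size(3))
  moreover have "smooth_upto n (partial_deriv b f)" if "b \<in> Basis" for b
    unfolding smooth_upto_def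
  proof (intro allI impI)
    fix bs :: "'a list" and x
    assume "set bs \<subseteq> Basis \<and> length bs \<le> n"
    with that f have "iter_partial (bs @ [b]) f differentiable (at x)"
      unfolding smooth_upto_def by auto
    then show "iter_partial bs (partial_deriv b f) differentiable (at x)"
      by (simp add: iter_partial_append_single)
  qed
  ultimately show "(\<forall>x. f differentiable (at x)) \<and> (\<forall>b\<in>Basis. smooth_upto n (partial_deriv b f))"
    by blast
next
  assume f: "(\<forall>x. f differentiable (at x)) \<and> (\<forall>b\<in>Basis. smooth_upto n (partial_deriv b f))"
  show "smooth_upto (Suc n) f" unfolding smooth_upto_def
  proof (intro allI impI)
    fix bs :: "'a list" and x
    assume bs: "set bs \<subseteq> Basis \<and> length bs \<le> Suc n"
    show "iter_partial bs f differentiable (at x)"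
    proof (cases bs rule: rev_exhaust)
      case Nil
      then show ?thesis using f by simp
    next
      case (snoc bs' b)
      with bs f have "iter_partial bs' (partial_deriv b f) differentiable (at x)"
        unfolding smooth_upto_def by auto
      then show ?thesis by (simp add: snoc iter_partial_append_single)
    qed
  qed
qed

lemma smooth_upto_SucD: "smooth_upto (Suc n) f \<Longrightarrow> smooth_upto n f"
  unfolding smooth_upto_def by auto

lemma smooth_upto_imp_differentiable: "smooth_upto n f \<Longrightarrow> f differentiable (at x)"
  by (induction n) (auto simp: smooth_upto_0 smooth_upto_Suc)

lemma smooth_upto_imp_continuous_on: "smooth_upto n f \<Longrightarrow> continuous_on S f"
  by (meson differentiable_at_imp_differentiable_on differentiable_imp_continuous_on
      smooth_upto_imp_differentiable)

lemma partial_deriv_const: "partial_deriv b (\<lambda>x. c) = (\<lambda>x. 0)"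
  by (simp add: partial_deriv_def)

lemma partial_deriv_add:
  assumes "\<And>x. f differentiable (at x)" "\<And>x. g differentiable (at x)"
  shows "partial_deriv b (\<lambda>x. f x + g x) = (\<lambda>x. partial_deriv b f x + partial_deriv b g x)"
proof
  fix x
  have "((\<lambda>x. f x + g x) has_derivative
      (\<lambda>h. frechet_derivative f (at x) h + frechet_derivative g (at x) h)) (at x)"
    using assms by (intro has_derivative_add) (auto simp: frechet_derivative_works[symmetric])
  from fun_cong[OF frechet_derivative_at[OF this], of b]
  show "partial_deriv b (\<lambda>x. f x + g x) x = partial_deriv b f x + partial_deriv b g x"
    unfolding partial_deriv_def by simp
qed

lemma partial_deriv_mult:
  assumes "\<And>x. f differentiable (at x)" "\<And>x. g differentiable (at x)"
  shows "partial_deriv b (\<lambda>x. f x * g x) = (\<lambda>x. f x * partial_deriv b g x + partial_deriv b f x * g x)"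
proof
  fix x
  have "((\<lambda>x. f x * g x) has_derivative
      (\<lambda>h. f x * frechet_derivative g (at x) h + frechet_derivative f (at x) h * g x)) (at x)"
    using assms by (intro has_derivative_mult) (auto simp: frechet_derivative_works[symmetric])
  from fun_cong[OF frechet_derivative_at[OF this], of b]
  show "partial_deriv b (\<lambda>x. f x * g x) x = f x * partial_deriv b g x + partial_deriv b f x * g x"
    unfolding partial_deriv_def by simp
qed

lemma partial_deriv_compose:
  assumes "(F has_real_derivative F' (f x)) (at (f x))" "f differentiable (at x)"
  shows "partial_deriv b (\<lambda>x. F (f x)) x = F' (f x) * partial_deriv b f x"
proof -
  have "(f has_derivative frechet_derivative f (at x)) (at x)"
    using assms(2) frechet_derivative_works by blast
  moreover have "(F has_derivative (\<lambda>h. F' (f x) * h)) (at (f x))"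
    using assms(1) by (simp add: has_field_derivative_def)
  ultimately have "((\<lambda>x. F (f x)) has_derivative (\<lambda>h. F' (f x) * frechet_derivative f (at x) h)) (at x)"
    using diff_chain_at by (fastforce simp: o_def)
  from fun_cong[OF frechet_derivative_at[OF this], of b] show ?thesis
    unfolding partial_deriv_def by simp
qed

lemma smooth_upto_const: "smooth_upto n (\<lambda>x. c)"
  by (induction n arbitrary: c) (auto simp: smooth_upto_0 smooth_upto_Suc partial_deriv_const)

lemma smooth_upto_add: "smooth_upto n f \<Longrightarrow> smooth_upto n g \<Longrightarrow> smooth_upto n (\<lambda>x. f x + g x)"
proof (induction n arbitrary: f g)
  case 0
  then show ?case by (auto simp: smooth_upto_0)
next
  case (Suc n)
  have "\<And>x. f differentiable (at x)" "\<And>x. g differentiable (at x)"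
    using Suc.prems smooth_upto_imp_differentiable by blast+
  with Suc show ?case
    by (auto simp: smooth_upto_Suc partial_deriv_add)
qed

lemma smooth_upto_mult: "smooth_upto n f \<Longrightarrow> smooth_upto n g \<Longrightarrow> smooth_upto n (\<lambda>x. f x * g x)"
proof (induction n arbitrary: f g)
  case 0
  then show ?case by (auto simp: smooth_upto_0)
next
  case (Suc n)
  have "\<And>x. f differentiable (at x)" "\<And>x. g differentiable (at x)"
    using Suc.prems smooth_upto_imp_differentiable by blast+
  moreover have "smooth_upto n f" "smooth_upto n g"
    using Suc.prems smooth_upto_SucD by blast+
  ultimately show ?case
    using Suc by (auto simp: smooth_upto_Suc partial_deriv_mult intro!: smooth_upto_add)
qed

lemma smooth_upto_linear:
  assumes "bounded_linear f"
  shows "smooth_upto n f"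
proof -
  have "partial_deriv b f = (\<lambda>x. f b)" for b
    using frechet_derivative_at[OF bounded_linear_imp_has_derivative[OF assms]]
    by (simp add: partial_deriv_def)
  then show ?thesis
    using assms by (cases n) (auto simp: smooth_upto_0 smooth_upto_Suc smooth_upto_const
        intro: bounded_linear_imp_differentiable)
qed

lemma smooth_upto_polynomial:
  "real_polynomial_function f \<Longrightarrow> smooth_upto n (f :: 'a::euclidean_space \<Rightarrow> real)"
  by (induction rule: real_polynomial_function.induct)
    (auto intro: smooth_upto_linear smooth_upto_const smooth_upto_add smooth_upto_mult)

definition derivative_tower :: "real set \<Rightarrow> (nat \<Rightarrow> real \<Rightarrow> real) \<Rightarrow> bool" where
  "derivative_tower A F \<longleftrightarrow> (\<forall>n. \<forall>t\<in>A. (F n has_real_derivative F (Suc n) t) (at t))"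

lemma smooth_upto_compose:
  assumes "derivative_tower A F" "\<And>x. f x \<in> A" "smooth_upto n f"
  shows "smooth_upto n (\<lambda>x. F k (f x))"
  using assms(3)
proof (induction n arbitrary: k)
  case 0
  have "F k differentiable (at (f x))" for x
    using assms(1,2) unfolding derivative_tower_def
    by (meson differentiableI has_field_derivative_imp_has_derivative)
  with 0 show ?case
    by (auto simp: smooth_upto_0 intro: differentiable_chain_at[unfolded o_def])
next
  case (Suc n)
  have df: "\<And>x. f differentiable (at x)"
    using Suc.prems smooth_upto_imp_differentiable by blast
  have "partial_deriv b (\<lambda>x. F k (f x)) = (\<lambda>x. F (Suc k) (f x) * partial_deriv b f x)" for b k
    using assms(1,2) df by (auto simp: derivative_tower_def intro!: partial_deriv_compose)
  moreover have "smooth_upto n f"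
    using Suc.prems by (rule smooth_upto_SucD)
  moreover have "(\<lambda>x. F k (f x)) differentiable (at x)" for x
    using Suc.IH[OF \<open>smooth_upto n f\<close>] by (rule smooth_upto_imp_differentiable)
  ultimately show ?case
    using Suc by (auto simp: smooth_upto_Suc intro!: smooth_upto_mult)
qed

section \<open>A smooth partition of unity separating two compact sets\<close>

text \<open>
  \<open>exp_bump n\<close> is the \<open>n\<close>-th derivative of the smooth function equal to \<open>exp (-1/t)\<close> for \<open>t > 0\<close>
  and to \<open>0\<close> otherwise; the recursion for \<open>exp_bump_poly\<close> comes from
  \<open>d/dt (P(1/t) exp(-1/t)) = t\<^sup>-\<^sup>2 (P - P')(1/t) exp(-1/t)\<close>.
\<close>

fun exp_bump_poly :: "nat \<Rightarrow> real poly" where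
  "exp_bump_poly 0 = 1"
| "exp_bump_poly (Suc n) = [:0, 0, 1:] * (exp_bump_poly n - pderiv (exp_bump_poly n))"

definition exp_bump :: "nat \<Rightarrow> real \<Rightarrow> real" where
  "exp_bump n t = (if t > 0 then poly (exp_bump_poly n) (1/t) * exp (-1/t) else 0)"

lemma exp_bump_0: "exp_bump 0 t = (if t > 0 then exp (-1/t) else 0)"
  by (simp add: exp_bump_def)

lemma tendsto_poly_inverse_mult_exp_0:
  "((\<lambda>t. poly Q (1/t) * exp (-1/t)) \<longlongrightarrow> 0) (at_right (0::real))"
proof -
  have "((\<lambda>s. \<Sum>i\<le>degree Q. coeff Q i * (s ^ i / exp s)) \<longlongrightarrow> (\<Sum>i\<le>degree Q. coeff Q i * 0)) at_top"
    by (intro tendsto_sum tendsto_mult tendsto_const tendsto_power_div_exp_0)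
  moreover have "(\<Sum>i\<le>degree Q. coeff Q i * (s ^ i / exp s)) = poly Q s * exp (- s)" for s
    by (simp add: poly_altdef exp_minus sum_distrib_right divide_inverse mult.assoc)
  ultimately have "((\<lambda>s. poly Q s * exp (- s)) \<longlongrightarrow> 0) at_top"
    by simp
  from filterlim_compose[OF this filterlim_inverse_at_top_right] show ?thesis
    by (simp add: o_def inverse_eq_divide)
qed

lemma exp_bump_has_derivative_pos:
  assumes "t > 0"
  shows "(exp_bump n has_real_derivative exp_bump (Suc n) t) (at t)"
proof -
  have ev: "eventually (\<lambda>y. exp_bump n y = poly (exp_bump_poly n) (1/y) * exp (-1/y)) (nhds t)"
    using eventually_nhds_in_open[of "{0<..}" t] assms
    by (auto simp: exp_bump_def elim!: eventually_mono)
  have "((\<lambda>y. poly (exp_bump_poly n) (1/y) * exp (-1/y)) has_real_derivative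
      poly (pderiv (exp_bump_poly n)) (1/t) * (- 1 / t\<^sup>2) * exp (-1/t)
        + poly (exp_bump_poly n) (1/t) * (exp (-1/t) * (1 / t\<^sup>2))) (at t)"
    using assms
    by (auto intro!: derivative_eq_intros DERIV_chain2[OF poly_DERIV]
        simp: power2_eq_square field_simps)
  also have "poly (pderiv (exp_bump_poly n)) (1/t) * (- 1 / t\<^sup>2) * exp (-1/t)
        + poly (exp_bump_poly n) (1/t) * (exp (-1/t) * (1 / t\<^sup>2)) = exp_bump (Suc n) t"
    using assms by (simp add: exp_bump_def algebra_simps power2_eq_square divide_inverse)
  finally show ?thesis
    using DERIV_cong_ev[OF refl ev refl] by simp
qed

lemma exp_bump_has_derivative_nonpos:
  assumes "t < 0"
  shows "(exp_bump n has_real_derivative exp_bump (Suc n) t) (at t)"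
proof -
  have ev: "eventually (\<lambda>y. exp_bump n y = 0) (nhds t)"
    using eventually_nhds_in_open[of "{..<0}" t] assms
    by (auto simp: exp_bump_def elim!: eventually_mono)
  have "exp_bump (Suc n) t = 0"
    using assms by (simp add: exp_bump_def)
  then show ?thesis
    using DERIV_cong_ev[OF refl ev refl] by simp
qed

lemma exp_bump_has_derivative_0: "(exp_bump n has_real_derivative exp_bump (Suc n) 0) (at 0)"
proof -
  have "((\<lambda>y. (exp_bump n y - exp_bump n 0) / (y - 0)) \<longlongrightarrow> 0) (at (0::real))"
  proof (rule filterlim_split_at)
    show "((\<lambda>y. (exp_bump n y - exp_bump n 0) / (y - 0)) \<longlongrightarrow> 0) (at_left 0)"
      by (rule tendsto_eventually)
        (auto simp: eventually_at_left_field exp_bump_def intro: exI[of _ "-1"])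
  next
    have "((\<lambda>t. poly ([:0, 1:] * exp_bump_poly n) (1/t) * exp (-1/t)) \<longlongrightarrow> 0) (at_right 0)"
      by (rule tendsto_poly_inverse_mult_exp_0)
    moreover have "eventually (\<lambda>t. poly ([:0, 1:] * exp_bump_poly n) (1/t) * exp (-1/t)
        = (exp_bump n t - exp_bump n 0) / (t - 0)) (at_right 0)"
      by (auto simp: eventually_at_right_field exp_bump_def intro!: exI[of _ 1])
    ultimately show "((\<lambda>y. (exp_bump n y - exp_bump n 0) / (y - 0)) \<longlongrightarrow> 0) (at_right 0)"
      by (rule Lim_transform_eventually)
  qed
  then show ?thesis
    by (simp add: has_field_derivative_iff exp_bump_def)
qed

lemma derivative_tower_exp_bump: "derivative_tower UNIV exp_bump"
  unfolding derivative_tower_def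
  using exp_bump_has_derivative_pos exp_bump_has_derivative_nonpos exp_bump_has_derivative_0
  by (metis linorder_neqE_linordered_idom)

definition powr_deriv :: "real \<Rightarrow> nat \<Rightarrow> real \<Rightarrow> real" where
  "powr_deriv a k t = (\<Prod>i<k. a - real i) * t powr (a - real k)"

lemma derivative_tower_powr_deriv: "derivative_tower {0<..} (powr_deriv a)"
  unfolding derivative_tower_def
proof (intro allI ballI)
  fix k and t :: real
  assume "t \<in> {0<..}"
  then have "((\<lambda>t. (\<Prod>i<k. a - real i) * t powr (a - real k)) has_real_derivative
      (\<Prod>i<k. a - real i) * ((a - real k) * t powr (a - real k - 1))) (at t)"
    by (intro DERIV_cmult has_real_derivative_powr) simp
  moreover have "(\<Prod>i<k. a - real i) * ((a - real k) * t powr (a - real k - 1)) = powr_deriv a (Suc k) t"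
    by (simp add: powr_deriv_def algebra_simps)
  ultimately show "(powr_deriv a k has_real_derivative powr_deriv a (Suc k) t) (at t)"
    by (simp add: powr_deriv_def[abs_def])
qed

lemma real_polynomial_separates_compacts:
  fixes S T :: "'a::euclidean_space set"
  assumes "compact S" "compact T" "S \<inter> T = {}"
  obtains p where "real_polynomial_function p"
    "\<And>x. x \<in> S \<Longrightarrow> p x > 1/4" "\<And>x. x \<in> T \<Longrightarrow> p x < -1/4"
proof -
  define f where "f x = (if x \<in> S then 1 else -1::real)" for x
  have "continuous_on (S \<union> T) f"
  proof (rule continuous_on_closed_Un)
    show "closed S" "closed T"
      using assms compact_imp_closed by auto
    show "continuous_on S f"
      by (rule continuous_on_eq[OF continuous_on_const[of S 1]]) (simp add: f_def)
    show "continuous_on T f"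
      using assms(3) by (intro continuous_on_eq[OF continuous_on_const[of T "-1"]]) (auto simp: f_def)
  qed
  then obtain p where p: "real_polynomial_function p" "\<And>x. x \<in> S \<union> T \<Longrightarrow> \<bar>f x - p x\<bar> < 1/4"
    using Stone_Weierstrass_real_polynomial_function[of "S \<union> T" f "1/4"] assms by auto
  show ?thesis
  proof (rule that[OF p(1)])
    fix x
    assume "x \<in> S"
    then have "\<bar>1 - p x\<bar> < 1/4"
      using p(2)[of x] by (simp add: f_def)
    then show "p x > 1/4"
      by (simp only: abs_less_iff) linarith
  next
    fix x
    assume "x \<in> T"
    moreover have "x \<notin> S"
      using assms(3) \<open>x \<in> T\<close> by blast
    ultimately have "\<bar>-1 - p x\<bar> < 1/4"
      using p(2)[of x] by (simp add: f_def)
    then show "p x < -1/4"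
      by (simp only: abs_less_iff) linarith
  qed
qed

lemma smooth_normalized_pair:
  fixes s1 s2 :: "'a::euclidean_space \<Rightarrow> real"
  assumes "smooth_fun s1" "smooth_fun s2" "\<And>x. s1 x \<noteq> 0 \<or> s2 x \<noteq> 0"
  obtains c1 c2 where "smooth_fun c1" "smooth_fun c2" "\<And>x. (c1 x)\<^sup>2 + (c2 x)\<^sup>2 = 1"
    "\<And>x. s1 x = 0 \<Longrightarrow> c1 x = 0" "\<And>x. s2 x = 0 \<Longrightarrow> c2 x = 0"
proof -
  define s where "s x = s1 x * s1 x + s2 x * s2 x" for x
  have s_pos: "s x > 0" for x
    using assms(3)[of x] by (simp add: s_def sum_squares_gt_zero_iff)
  \<comment> \<open>\<open>r = s powr (-1/2) = 1 / sqrt s\<close>\<close>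
  define r where "r x = powr_deriv (-1/2) 0 (s x)" for x
  have "smooth_upto n s" for n
    using assms(1,2) unfolding s_def smooth_fun_iff_smooth_upto by (intro smooth_upto_add smooth_upto_mult) auto
  then have "smooth_upto n r" for n
    unfolding r_def using s_pos by (intro smooth_upto_compose[OF derivative_tower_powr_deriv]) auto
  then have "smooth_fun (\<lambda>x. s1 x * r x)" "smooth_fun (\<lambda>x. s2 x * r x)"
    using assms(1,2) by (auto simp: smooth_fun_iff_smooth_upto intro: smooth_upto_mult)
  moreover have "(s1 x * r x)\<^sup>2 + (s2 x * r x)\<^sup>2 = 1" for x
  proof -
    have "(r x)\<^sup>2 = 1 / s x"
      using s_pos[of x]
      by (simp add: r_def powr_deriv_def power2_eq_square powr_add[symmetric] powr_minus_divide)
    moreover have "(s1 x * r x)\<^sup>2 + (s2 x * r x)\<^sup>2 = (r x)\<^sup>2 * s x"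
      by (simp add: s_def power2_eq_square algebra_simps)
    ultimately show ?thesis
      using s_pos[of x] by simp
  qed
  ultimately show ?thesis
    by (rule that) auto
qed

lemma smooth_cutoff_pair:
  fixes S1 S2 :: "'a::euclidean_space set"
  assumes "compact S1" "compact S2" "S1 \<inter> S2 = {}"
  obtains c1 c2 :: "'a \<Rightarrow> real" and N1 N2 where
    "smooth_fun c1" "smooth_fun c2" "\<And>x. (c1 x)\<^sup>2 + (c2 x)\<^sup>2 = 1"
    "open N1" "S1 \<subseteq> N1" "\<And>x. x \<in> N1 \<Longrightarrow> c2 x = 0"
    "open N2" "S2 \<subseteq> N2" "\<And>x. x \<in> N2 \<Longrightarrow> c1 x = 0"
proof -
  obtain p where p: "real_polynomial_function p"
    "\<And>x. x \<in> S1 \<Longrightarrow> p x > 1/4" "\<And>x. x \<in> S2 \<Longrightarrow> p x < -1/4"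
    using real_polynomial_separates_compacts[OF assms] by blast
  have smooth_p: "smooth_upto n p" for n
    using p(1) by (rule smooth_upto_polynomial)
  have "smooth_fun (\<lambda>x. exp_bump 0 (p x + 1/4))" "smooth_fun (\<lambda>x. exp_bump 0 ((-1) * p x + 1/4))"
    unfolding smooth_fun_iff_smooth_upto
    by (intro allI smooth_upto_compose[OF derivative_tower_exp_bump] UNIV_I
        smooth_upto_add smooth_upto_mult smooth_upto_const smooth_p)+
  moreover have "exp_bump 0 (p x + 1/4) \<noteq> 0 \<or> exp_bump 0 ((-1) * p x + 1/4) \<noteq> 0" for x
    by (auto simp: exp_bump_0)
  ultimately obtain c1 c2 where c: "smooth_fun c1" "smooth_fun c2" "\<And>x. (c1 x)\<^sup>2 + (c2 x)\<^sup>2 = 1"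
    "\<And>x. exp_bump 0 (p x + 1/4) = 0 \<Longrightarrow> c1 x = 0" "\<And>x. exp_bump 0 ((-1) * p x + 1/4) = 0 \<Longrightarrow> c2 x = 0"
    by (rule smooth_normalized_pair) blast
  have cont_p: "continuous_on UNIV p"
    using smooth_p by (rule smooth_upto_imp_continuous_on)
  show ?thesis
  proof (rule that[OF c(1-3)])
    show "open {x. 1/4 < p x}" "open {x. p x < -1/4}"
      by (rule open_Collect_less[OF continuous_on_const cont_p],
          rule open_Collect_less[OF cont_p continuous_on_const])
    show "S1 \<subseteq> {x. 1/4 < p x}" "S2 \<subseteq> {x. p x < -1/4}"
      using p by auto
    show "c2 x = 0" if "x \<in> {x. 1/4 < p x}" for x
      using that by (intro c(5)) (simp add: exp_bump_0)
    show "c1 x = 0" if "x \<in> {x. p x < -1/4}" for x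
      using that by (intro c(4)) (simp add: exp_bump_0)
  qed
qed

section \<open>Gradients and the IMS localization formula\<close>

lemma grad_eq_sum_partial_deriv: "grad f x = (\<Sum>b\<in>Basis. partial_deriv b f x *\<^sub>R b)"
  by (simp add: grad_def partial_deriv_def)

lemma continuous_on_grad:
  assumes "smooth_upto (Suc n) f"
  shows "continuous_on S (grad f)"
proof -
  have "continuous_on S (partial_deriv b f)" if "b \<in> Basis" for b
    using assms that by (auto simp: smooth_upto_Suc intro: smooth_upto_imp_continuous_on)
  then show ?thesis
    unfolding grad_eq_sum_partial_deriv[abs_def] by (intro continuous_intros) auto
qed

lemma grad_eq_0_on_open:
  assumes "open U" "x \<in> U" "\<And>y. y \<in> U \<Longrightarrow> f y = 0"
  shows "grad f x = 0"
proof -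
  have "(f has_derivative (\<lambda>h. 0)) (at x)"
    using has_derivative_transform_within_open[OF has_derivative_const assms(1,2)] assms(3)
    by (metis (mono_tags, lifting))
  then have "frechet_derivative f (at x) = (\<lambda>h. 0)"
    by (metis frechet_derivative_at)
  then show ?thesis
    by (simp add: grad_def)
qed

lemma grad_eq_0_outside_support:
  assumes "x \<notin> closure {x. f x \<noteq> 0}"
  shows "grad f x = 0"
  using assms closure_subset[of "{x. f x \<noteq> 0}"]
  by (intro grad_eq_0_on_open[of "- closure {x. f x \<noteq> 0}"]) auto

lemma grad_mult:
  assumes "\<And>x. f differentiable (at x)" "\<And>x. g differentiable (at x)"
  shows "grad (\<lambda>x. f x * g x) x = f x *\<^sub>R grad g x + g x *\<^sub>R grad f x"
  by (simp add: grad_eq_sum_partial_deriv partial_deriv_mult[OF assms] scaleR_add_left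
      sum.distrib scaleR_sum_right mult.commute)

lemma grad_orthogonal_if_sum_squares_const:
  assumes "smooth_fun c1" "smooth_fun c2" "\<And>x. (c1 x)\<^sup>2 + (c2 x)\<^sup>2 = 1"
  shows "c1 x *\<^sub>R grad c1 x + c2 x *\<^sub>R grad c2 x = 0"
proof -
  have smooth: "smooth_upto 0 c1" "smooth_upto 0 c2"
    using assms(1,2) by (auto simp: smooth_fun_iff_smooth_upto)
  then have diff: "\<And>x. c1 differentiable (at x)" "\<And>x. c2 differentiable (at x)"
    "\<And>x. (\<lambda>x. c1 x * c1 x) differentiable (at x)" "\<And>x. (\<lambda>x. c2 x * c2 x) differentiable (at x)"
    by (auto intro: smooth_upto_imp_differentiable smooth_upto_mult)
  have one: "(\<lambda>x. c1 x * c1 x + c2 x * c2 x) = (\<lambda>x. 1)"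
    using assms(3) by (simp add: power2_eq_square)
  have "c1 x * partial_deriv b c1 x + c2 x * partial_deriv b c2 x = 0" for b
  proof -
    have "2 * (c1 x * partial_deriv b c1 x + c2 x * partial_deriv b c2 x)
        = partial_deriv b (\<lambda>x. c1 x * c1 x + c2 x * c2 x) x"
      by (simp add: partial_deriv_add[OF diff(3,4)] partial_deriv_mult[OF diff(1,1)]
          partial_deriv_mult[OF diff(2,2)] algebra_simps)
    also have "\<dots> = 0"
      unfolding one by (simp add: partial_deriv_const)
    finally show ?thesis
      by simp
  qed
  then show ?thesis
    by (simp add: grad_eq_sum_partial_deriv scaleR_sum_right sum.distrib[symmetric]
        scaleR_add_left[symmetric])
qed

lemma norm_sq_rotation_identity:
  fixes a p q :: "'a::real_inner"
  assumes "\<alpha> *\<^sub>R p + \<beta> *\<^sub>R q = 0" "\<alpha>\<^sup>2 + \<beta>\<^sup>2 = 1"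
  shows "(norm (\<alpha> *\<^sub>R a + t *\<^sub>R p))\<^sup>2 + (norm (\<beta> *\<^sub>R a + t *\<^sub>R q))\<^sup>2
       = (norm a)\<^sup>2 + t\<^sup>2 * ((norm p)\<^sup>2 + (norm q)\<^sup>2)"
proof -
  have orth: "\<alpha> * inner a p + \<beta> * inner a q = 0"
    using arg_cong[OF assms(1), of "inner a"] by (simp add: inner_add_right)
  have "(norm (\<alpha> *\<^sub>R a + t *\<^sub>R p))\<^sup>2 + (norm (\<beta> *\<^sub>R a + t *\<^sub>R q))\<^sup>2
      = (\<alpha>\<^sup>2 + \<beta>\<^sup>2) * inner a a + 2 * t * (\<alpha> * inner a p + \<beta> * inner a q)
        + t\<^sup>2 * (inner p p + inner q q)"
    unfolding power2_norm_eq_inner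
    by (simp add: inner_add_left inner_add_right inner_commute algebra_simps power2_eq_square)
  also have "\<dots> = (norm a)\<^sup>2 + t\<^sup>2 * ((norm p)\<^sup>2 + (norm q)\<^sup>2)"
    using orth assms(2) by (simp add: power2_norm_eq_inner)
  finally show ?thesis .
qed

lemma norm_grad_sq_localization:
  assumes "smooth_fun c1" "smooth_fun c2" "\<And>x. (c1 x)\<^sup>2 + (c2 x)\<^sup>2 = 1"
    and "\<And>x. u differentiable (at x)"
  shows "(norm (grad (\<lambda>x. c1 x * u x) x))\<^sup>2 + (norm (grad (\<lambda>x. c2 x * u x) x))\<^sup>2
       = (norm (grad u x))\<^sup>2 + (u x)\<^sup>2 * ((norm (grad c1 x))\<^sup>2 + (norm (grad c2 x))\<^sup>2)"
proof -
  have "\<And>x. c1 differentiable (at x)" "\<And>x. c2 differentiable (at x)"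
    using assms(1,2) by (auto simp: smooth_fun_iff_smooth_upto intro: smooth_upto_imp_differentiable)
  with assms show ?thesis
    by (simp add: grad_mult norm_sq_rotation_identity grad_orthogonal_if_sum_squares_const)
qed

section \<open>Test functions and the quadratic form\<close>

definition energy :: "'a::euclidean_space set \<Rightarrow> ('a \<Rightarrow> real) \<Rightarrow> ('a \<Rightarrow> real) \<Rightarrow> real" where
  "energy \<Omega> W u = (LINT x:\<Omega>|lebesgue. (norm (grad u x))\<^sup>2 - W x * (u x)\<^sup>2)"

definition L2_sq :: "'a::euclidean_space set \<Rightarrow> ('a \<Rightarrow> real) \<Rightarrow> real" where
  "L2_sq \<Omega> u = (LINT x:\<Omega>|lebesgue. (u x)\<^sup>2)"

lemma L2_sq_nonneg: "L2_sq \<Omega> u \<ge> 0"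
  unfolding L2_sq_def set_lebesgue_integral_def
  by (intro integral_nonneg_AE) (simp add: indicator_def)

lemma set_integrable_vanishing_outside:
  assumes "set_integrable M K f" "K \<subseteq> \<Omega>" "\<And>x. x \<notin> K \<Longrightarrow> f x = 0"
  shows "set_integrable M \<Omega> f"
proof -
  have "(\<lambda>x. indicator \<Omega> x *\<^sub>R f x) = (\<lambda>x. indicator K x *\<^sub>R f x)"
  proof
    fix x
    show "indicator \<Omega> x *\<^sub>R f x = indicator K x *\<^sub>R f x"
      using assms(2,3) by (cases "x \<in> K") auto
  qed
  with assms(1) show ?thesis
    unfolding set_integrable_def by simp
qed

lemma set_integrable_continuous_compact:
  fixes g :: "'a::euclidean_space \<Rightarrow> real"
  assumes "continuous_on UNIV g" "compact K"
  shows "set_integrable lebesgue K g"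
proof -
  obtain a where "K \<subseteq> cbox (-a) a"
    using bounded_subset_cbox_symmetric compact_imp_bounded assms(2) by metis
  moreover have "g absolutely_integrable_on cbox (-a) a"
    using assms(1) by (intro absolutely_integrable_continuous continuous_on_subset[OF assms(1)]) simp
  moreover have "K \<in> sets lebesgue"
    using lmeasurable_compact[OF assms(2)] by (rule fmeasurableD)
  ultimately show ?thesis
    using set_integrable_subset by blast
qed

lemma set_integrable_mult_continuous:
  fixes w V :: "'a::euclidean_space \<Rightarrow> real"
  assumes "set_integrable lebesgue K V" "continuous_on UNIV w" "compact K"
  shows "set_integrable lebesgue K (\<lambda>x. V x * w x)"
proof -
  have K: "K \<in> sets lebesgue"
    using lmeasurable_compact[OF assms(3)] by (rule fmeasurableD)
  have "w \<in> borel_measurable (lebesgue_on K)"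
    using continuous_on_subset[OF assms(2)] K by (intro continuous_imp_measurable_on_sets_lebesgue) auto
  moreover have "bounded (w ` K)"
    using compact_continuous_image[OF continuous_on_subset[OF assms(2)] assms(3)] compact_imp_bounded
    by blast
  ultimately have "(\<lambda>x. w x * V x) absolutely_integrable_on K"
    using absolutely_integrable_bounded_measurable_product[OF bilinear_times _ K _ assms(1)] by simp
  then show ?thesis
    by (simp add: mult.commute)
qed

lemma test_fun_support:
  assumes "test_fun \<Omega> u"
  shows "compact (closure {x. u x \<noteq> 0})" "closure {x. u x \<noteq> 0} \<subseteq> \<Omega>"
  using assms by (auto simp: test_fun_def)

lemma test_fun_continuous: "test_fun \<Omega> u \<Longrightarrow> continuous_on S u"
  by (auto simp: test_fun_def smooth_fun_iff_smooth_upto intro: smooth_upto_imp_continuous_on)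

lemma test_fun_set_integrable:
  fixes g :: "'a::euclidean_space \<Rightarrow> real"
  assumes "test_fun \<Omega> u" "continuous_on UNIV g" "\<And>x. x \<notin> closure {x. u x \<noteq> 0} \<Longrightarrow> g x = 0"
  shows "set_integrable lebesgue \<Omega> g"
  using set_integrable_continuous_compact[OF assms(2) test_fun_support(1)[OF assms(1)]]
    test_fun_support(2)[OF assms(1)] assms(3)
  by (rule set_integrable_vanishing_outside)

lemma test_fun_set_integrable_L1_loc:
  fixes V w :: "'a::euclidean_space \<Rightarrow> real"
  assumes "test_fun \<Omega> u" "L1_loc \<Omega> V" "continuous_on UNIV w"
    and "\<And>x. x \<notin> closure {x. u x \<noteq> 0} \<Longrightarrow> w x = 0"
  shows "set_integrable lebesgue \<Omega> (\<lambda>x. V x * w x)"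
proof -
  have "set_integrable lebesgue (closure {x. u x \<noteq> 0}) V"
    using assms(2) test_fun_support[OF assms(1)] unfolding L1_loc_def by blast
  from set_integrable_mult_continuous[OF this assms(3) test_fun_support(1)[OF assms(1)]]
  show ?thesis
    by (rule set_integrable_vanishing_outside[OF _ test_fun_support(2)[OF assms(1)]]) (simp add: assms(4))
qed

lemma test_fun_mult_smooth:
  assumes "smooth_fun c" "test_fun \<Omega> u"
  shows "test_fun \<Omega> (\<lambda>x. c x * u x)"
proof -
  let ?K = "closure {x. u x \<noteq> 0}"
  have "closure {x. c x * u x \<noteq> 0} \<subseteq> ?K"
    by (intro closure_mono) auto
  moreover have "compact (?K \<inter> closure {x. c x * u x \<noteq> 0})"
    using test_fun_support(1)[OF assms(2)] by (intro compact_Int_closed) auto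
  ultimately show ?thesis
    using assms test_fun_support(2)[OF assms(2)]
    by (auto simp: test_fun_def smooth_fun_iff_smooth_upto Int_absorb1 intro: smooth_upto_mult)
qed

lemma L2_sq_pos:
  fixes u :: "'a::euclidean_space \<Rightarrow> real"
  assumes "test_fun \<Omega> u" "u \<noteq> (\<lambda>x. 0)"
  shows "L2_sq \<Omega> u > 0"
proof (rule ccontr)
  assume "\<not> L2_sq \<Omega> u > 0"
  then have "L2_sq \<Omega> u = 0"
    using L2_sq_nonneg[of \<Omega> u] by simp
  have cont: "continuous_on UNIV u"
    using assms(1) by (rule test_fun_continuous)
  have "set_integrable lebesgue \<Omega> (\<lambda>x. (u x)\<^sup>2)"
    using assms(1) by (rule test_fun_set_integrable) (auto intro: continuous_intros cont closure_subset[THEN subsetD])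
  then have "AE x in lebesgue. indicator \<Omega> x *\<^sub>R (u x)\<^sup>2 = 0"
    using \<open>L2_sq \<Omega> u = 0\<close> integral_nonneg_eq_0_iff_AE[where f="\<lambda>x. indicator \<Omega> x *\<^sub>R (u x)\<^sup>2"]
    by (simp add: L2_sq_def set_integrable_def set_lebesgue_integral_def indicator_def)
  then have zero: "AE x in lebesgue. u x = 0"
    using test_fun_support(2)[OF assms(1)] closure_subset[of "{x. u x \<noteq> 0}"]
    by (elim eventually_mono) (auto simp: indicator_def split: if_splits)
  obtain x0 where "u x0 \<noteq> 0"
    using assms(2) by auto
  moreover have "open {x. u x \<noteq> 0}"
    using cont by (rule open_Collect_neq[OF _ continuous_on_const])
  ultimately obtain e where e: "e > 0" "ball x0 e \<subseteq> {x. u x \<noteq> 0}"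
    by (auto elim: openE)
  have "AE x in lebesgue. x \<notin> ball x0 e"
    using zero by (elim eventually_mono) (use e in blast)
  then have "emeasure lborel (ball x0 e) = 0"
    by (subst (asm) AE_iff_measurable[of "ball x0 e"]) auto
  with content_ball_pos[OF e(1), of x0] show False
    by (simp add: measure_def)
qed

lemma energy_zero: "energy \<Omega> W (\<lambda>x. 0) = 0"
  by (simp add: energy_def grad_def)

lemma lambda1_gt_MInf_iff:
  "lambda1 \<Omega> W > -\<infinity> \<longleftrightarrow> (\<exists>L\<le>0. \<forall>u. test_fun \<Omega> u \<longrightarrow> L * L2_sq \<Omega> u \<le> energy \<Omega> W u)"
proof
  assume "lambda1 \<Omega> W > -\<infinity>"
  then obtain r where r: "ereal r \<le> lambda1 \<Omega> W"
    by (cases "lambda1 \<Omega> W") auto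
  have "min r 0 * L2_sq \<Omega> u \<le> energy \<Omega> W u" if "test_fun \<Omega> u" for u
  proof (cases "u = (\<lambda>x. 0)")
    case True
    then show ?thesis
      by (simp add: energy_zero L2_sq_def)
  next
    case False
    with that have "lambda1 \<Omega> W \<le> ereal (energy \<Omega> W u / L2_sq \<Omega> u)"
      unfolding lambda1_def energy_def L2_sq_def by (intro INF_lower) auto
    with r have "min r 0 \<le> energy \<Omega> W u / L2_sq \<Omega> u"
      by (meson ereal_less_eq(3) min.coboundedI1 order_trans)
    then show ?thesis
      using L2_sq_pos[OF that False] by (simp add: le_divide_eq)
  qed
  then show "\<exists>L\<le>0. \<forall>u. test_fun \<Omega> u \<longrightarrow> L * L2_sq \<Omega> u \<le> energy \<Omega> W u"
    by (intro exI[of _ "min r 0"]) auto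
next
  assume "\<exists>L\<le>0. \<forall>u. test_fun \<Omega> u \<longrightarrow> L * L2_sq \<Omega> u \<le> energy \<Omega> W u"
  then obtain L where L: "\<And>u. test_fun \<Omega> u \<Longrightarrow> L * L2_sq \<Omega> u \<le> energy \<Omega> W u"
    by blast
  have "ereal L \<le> lambda1 \<Omega> W"
    unfolding lambda1_def
  proof (rule INF_greatest, clarify)
    fix u
    assume u: "test_fun \<Omega> u" "u \<noteq> (\<lambda>x. 0)"
    have "L \<le> energy \<Omega> W u / L2_sq \<Omega> u"
      using L[OF u(1)] L2_sq_pos[OF u] by (simp add: le_divide_eq)
    then show "ereal L \<le> ereal ((LINT x:\<Omega>|lebesgue. (norm (grad u x))\<^sup>2 - W x * (u x)\<^sup>2)
        / (LINT x:\<Omega>|lebesgue. (u x)\<^sup>2))"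
      by (simp add: energy_def L2_sq_def)
  qed
  then show "lambda1 \<Omega> W > -\<infinity>"
    by (cases "lambda1 \<Omega> W") auto
qed

section \<open>The localization argument\<close>

lemma Linf_loc_on_compact_bound:
  fixes V :: "'a::euclidean_space \<Rightarrow> real"
  assumes "Linf_loc_on \<Omega> T V" "compact C" "C \<subseteq> T"
  obtains M where "AE y in lebesgue. y \<in> C \<inter> \<Omega> \<longrightarrow> \<bar>V y\<bar> \<le> M"
proof -
  have "\<forall>x\<in>C. \<exists>e>0. \<exists>M. AE y in lebesgue. y \<in> ball x e \<inter> \<Omega> \<longrightarrow> \<bar>V y\<bar> \<le> M"
    using assms(1,3) unfolding Linf_loc_on_def by blast
  then obtain e M where eM: "\<And>x. x \<in> C \<Longrightarrow> e x > 0"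
    "\<And>x. x \<in> C \<Longrightarrow> AE y in lebesgue. y \<in> ball x (e x) \<inter> \<Omega> \<longrightarrow> \<bar>V y\<bar> \<le> M x"
    by metis
  have "C \<subseteq> (\<Union>x\<in>C. ball x (e x))"
    using eM(1) by force
  then obtain F where F: "F \<subseteq> C" "finite F" "C \<subseteq> (\<Union>x\<in>F. ball x (e x))"
    using compactE_image[OF assms(2), of C "\<lambda>x. ball x (e x)"] by blast
  have "AE y in lebesgue. \<forall>x\<in>F. y \<in> ball x (e x) \<inter> \<Omega> \<longrightarrow> \<bar>V y\<bar> \<le> M x"
    using eM(2) F(1,2) by (subst AE_finite_all) auto
  then have "AE y in lebesgue. y \<in> C \<inter> \<Omega> \<longrightarrow> \<bar>V y\<bar> \<le> (\<Sum>x\<in>F. \<bar>M x\<bar>)"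
  proof (rule eventually_mono, intro impI)
    fix y
    assume bound: "\<forall>x\<in>F. y \<in> ball x (e x) \<inter> \<Omega> \<longrightarrow> \<bar>V y\<bar> \<le> M x" and y: "y \<in> C \<inter> \<Omega>"
    then obtain x where x: "x \<in> F" "y \<in> ball x (e x)"
      using F(3) by blast
    then have "\<bar>V y\<bar> \<le> \<bar>M x\<bar>"
      using bound y by force
    also have "\<dots> \<le> (\<Sum>x\<in>F. \<bar>M x\<bar>)"
      using x(1) F(2) by (intro member_le_sum) auto
    finally show "\<bar>V y\<bar> \<le> (\<Sum>x\<in>F. \<bar>M x\<bar>)" .
  qed
  then show ?thesis
    by (rule that)
qed

lemma test_fun_set_integrable_sq_mult:
  assumes "test_fun \<Omega> u" "continuous_on UNIV g"
  shows "set_integrable lebesgue \<Omega> (\<lambda>x. g x * (u x)\<^sup>2)"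
  using assms(2) closure_subset[of "{x. u x \<noteq> 0}"]
  by (intro test_fun_set_integrable[OF assms(1)]) (auto intro!: continuous_intros test_fun_continuous[OF assms(1)])

lemma energy_integrand_integrable:
  assumes "test_fun \<Omega> u" "L1_loc \<Omega> V"
  shows "set_integrable lebesgue \<Omega> (\<lambda>x. (norm (grad u x))\<^sup>2 - V x * (u x)\<^sup>2)"
proof (rule set_integral_diff(1))
  have "continuous_on UNIV (grad u)"
    using assms(1) by (auto simp: test_fun_def smooth_fun_iff_smooth_upto intro: continuous_on_grad)
  then show "set_integrable lebesgue \<Omega> (\<lambda>x. (norm (grad u x))\<^sup>2)"
    by (intro test_fun_set_integrable[OF assms(1)]) (auto intro!: continuous_intros grad_eq_0_outside_support)
  show "set_integrable lebesgue \<Omega> (\<lambda>x. V x * (u x)\<^sup>2)"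
    using closure_subset[of "{x. u x \<noteq> 0}"]
    by (intro test_fun_set_integrable_L1_loc[OF assms]) (auto intro!: continuous_intros test_fun_continuous[OF assms(1)])
qed

definition ims_error ::
  "('a::euclidean_space \<Rightarrow> real) \<Rightarrow> ('a \<Rightarrow> real) \<Rightarrow> ('a \<Rightarrow> real) \<Rightarrow> ('a \<Rightarrow> real) \<Rightarrow> 'a \<Rightarrow> real" where
  "ims_error c1 c2 V1 V2 x =
     V1 x * (c2 x)\<^sup>2 + V2 x * (c1 x)\<^sup>2 + (norm (grad c1 x))\<^sup>2 + (norm (grad c2 x))\<^sup>2"

lemma ims_error_integrable:
  assumes "smooth_fun c1" "smooth_fun c2" "test_fun \<Omega> u" "L1_loc \<Omega> V1" "L1_loc \<Omega> V2"
  shows "set_integrable lebesgue \<Omega> (\<lambda>x. ims_error c1 c2 V1 V2 x * (u x)\<^sup>2)"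
proof -
  have smooth: "smooth_upto (Suc 0) c1" "smooth_upto (Suc 0) c2"
    using assms(1,2) by (auto simp: smooth_fun_iff_smooth_upto)
  then have "continuous_on UNIV c1" "continuous_on UNIV c2"
    "continuous_on UNIV (\<lambda>x. (norm (grad c1 x))\<^sup>2 + (norm (grad c2 x))\<^sup>2)"
    by (auto intro!: continuous_intros continuous_on_grad[OF smooth(1)] continuous_on_grad[OF smooth(2)]
        intro: smooth_upto_imp_continuous_on)
  then have "set_integrable lebesgue \<Omega> (\<lambda>x. V1 x * ((c2 x)\<^sup>2 * (u x)\<^sup>2))"
    "set_integrable lebesgue \<Omega> (\<lambda>x. V2 x * ((c1 x)\<^sup>2 * (u x)\<^sup>2))"
    "set_integrable lebesgue \<Omega> (\<lambda>x. ((norm (grad c1 x))\<^sup>2 + (norm (grad c2 x))\<^sup>2) * (u x)\<^sup>2)"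
    using closure_subset[of "{x. u x \<noteq> 0}"]
    by (auto intro!: test_fun_set_integrable_L1_loc[OF assms(3,4)] test_fun_set_integrable_L1_loc[OF assms(3,5)]
        test_fun_set_integrable_sq_mult[OF assms(3)] continuous_intros test_fun_continuous[OF assms(3)])
  then have "set_integrable lebesgue \<Omega> (\<lambda>x. V1 x * ((c2 x)\<^sup>2 * (u x)\<^sup>2) + V2 x * ((c1 x)\<^sup>2 * (u x)\<^sup>2)
      + ((norm (grad c1 x))\<^sup>2 + (norm (grad c2 x))\<^sup>2) * (u x)\<^sup>2)"
    by (intro set_integral_add(1))
  moreover have "(\<lambda>x. ims_error c1 c2 V1 V2 x * (u x)\<^sup>2) = (\<lambda>x. V1 x * ((c2 x)\<^sup>2 * (u x)\<^sup>2)
      + V2 x * ((c1 x)\<^sup>2 * (u x)\<^sup>2) + ((norm (grad c1 x))\<^sup>2 + (norm (grad c2 x))\<^sup>2) * (u x)\<^sup>2)"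
    by (simp add: ims_error_def fun_eq_iff algebra_simps)
  ultimately show ?thesis
    by simp
qed

lemma energy_localization:
  assumes "smooth_fun c1" "smooth_fun c2" "\<And>x. (c1 x)\<^sup>2 + (c2 x)\<^sup>2 = 1"
    and "test_fun \<Omega> u" "L1_loc \<Omega> V1" "L1_loc \<Omega> V2"
  shows "energy \<Omega> (\<lambda>x. V1 x + V2 x) u
       = energy \<Omega> V1 (\<lambda>x. c1 x * u x) + energy \<Omega> V2 (\<lambda>x. c2 x * u x)
         - (LINT x:\<Omega>|lebesgue. ims_error c1 c2 V1 V2 x * (u x)\<^sup>2)"
proof -
  have u_diff: "\<And>x. u differentiable (at x)"
    using assms(4) by (auto simp: test_fun_def smooth_fun_iff_smooth_upto intro: smooth_upto_imp_differentiable)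
  have pointwise: "(norm (grad u x))\<^sup>2 - (V1 x + V2 x) * (u x)\<^sup>2
      = ((norm (grad (\<lambda>x. c1 x * u x) x))\<^sup>2 - V1 x * (c1 x * u x)\<^sup>2)
        + ((norm (grad (\<lambda>x. c2 x * u x) x))\<^sup>2 - V2 x * (c2 x * u x)\<^sup>2)
        - ims_error c1 c2 V1 V2 x * (u x)\<^sup>2" for x
  proof -
    have "(V1 x + V2 x) * (u x)\<^sup>2 = (V1 x + V2 x) * (u x)\<^sup>2 * ((c1 x)\<^sup>2 + (c2 x)\<^sup>2)"
      using assms(3) by simp
    with norm_grad_sq_localization[OF assms(1-3) u_diff, of x] show ?thesis
      by (simp add: ims_error_def power_mult_distrib algebra_simps)
  qed
  have "set_integrable lebesgue \<Omega> (\<lambda>x. (norm (grad (\<lambda>x. c1 x * u x) x))\<^sup>2 - V1 x * (c1 x * u x)\<^sup>2)"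
    "set_integrable lebesgue \<Omega> (\<lambda>x. (norm (grad (\<lambda>x. c2 x * u x) x))\<^sup>2 - V2 x * (c2 x * u x)\<^sup>2)"
    using assms(1,2,4-6) by (auto intro!: energy_integrand_integrable test_fun_mult_smooth)
  then show ?thesis
    unfolding energy_def pointwise
    by (simp only: set_integral_diff(2)[OF set_integral_add(1) ims_error_integrable[OF assms(1,2,4-6)]]
        set_integral_add(2))
qed

lemma test_fun_set_integrable_sq:
  assumes "test_fun \<Omega> u"
  shows "set_integrable lebesgue \<Omega> (\<lambda>x. (u x)\<^sup>2)"
  using test_fun_set_integrable_sq_mult[OF assms continuous_on_const[of UNIV 1]] by simp

lemma L2_sq_mult_le:
  assumes "test_fun \<Omega> u" "smooth_fun c" "\<And>x. (c x)\<^sup>2 \<le> 1"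
  shows "L2_sq \<Omega> (\<lambda>x. c x * u x) \<le> L2_sq \<Omega> u"
  unfolding L2_sq_def
proof (rule set_integral_mono)
  show "set_integrable lebesgue \<Omega> (\<lambda>x. (c x * u x)\<^sup>2)"
    using assms(1,2) by (intro test_fun_set_integrable_sq test_fun_mult_smooth)
  show "set_integrable lebesgue \<Omega> (\<lambda>x. (u x)\<^sup>2)"
    using assms(1) by (rule test_fun_set_integrable_sq)
  show "(c x * u x)\<^sup>2 \<le> (u x)\<^sup>2" for x
    using assms(3)[of x] by (simp add: power_mult_distrib mult_left_le_one_le)
qed

lemma energy_mult_lower_bound:
  assumes "L \<le> 0" "\<And>v. test_fun \<Omega> v \<Longrightarrow> L * L2_sq \<Omega> v \<le> energy \<Omega> W v"
    and "test_fun \<Omega> u" "smooth_fun c" "\<And>x. (c x)\<^sup>2 \<le> 1"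
  shows "L * L2_sq \<Omega> u \<le> energy \<Omega> W (\<lambda>x. c x * u x)"
proof -
  have "L * L2_sq \<Omega> u \<le> L * L2_sq \<Omega> (\<lambda>x. c x * u x)"
    using L2_sq_mult_le[OF assms(3-5)] assms(1) by (rule mult_left_mono_neg)
  also have "\<dots> \<le> energy \<Omega> W (\<lambda>x. c x * u x)"
    using assms(2-4) test_fun_mult_smooth by blast
  finally show ?thesis .
qed

lemma set_integral_weight_le_L2_sq:
  assumes "set_integrable lebesgue \<Omega> (\<lambda>x. w x * (u x)\<^sup>2)" "test_fun \<Omega> u"
    and "AE x in lebesgue. x \<in> \<Omega> \<longrightarrow> w x \<le> M"
  shows "(LINT x:\<Omega>|lebesgue. w x * (u x)\<^sup>2) \<le> M * L2_sq \<Omega> u"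
proof -
  have "AE x in lebesgue. x \<in> \<Omega> \<longrightarrow> w x * (u x)\<^sup>2 \<le> M * (u x)\<^sup>2"
    using assms(3) by (rule eventually_mono) (auto intro: mult_right_mono)
  then have "(LINT x:\<Omega>|lebesgue. w x * (u x)\<^sup>2) \<le> (LINT x:\<Omega>|lebesgue. M * (u x)\<^sup>2)"
    using assms(1) test_fun_set_integrable_sq[OF assms(2)]
    by (intro set_integral_mono_AE) (auto intro: set_integrable_mult_right)
  then show ?thesis
    by (simp add: L2_sq_def)
qed

lemma mult_sq_le_abs_bound:
  fixes V M c :: real
  assumes "c \<noteq> 0 \<Longrightarrow> \<bar>V\<bar> \<le> M" "c\<^sup>2 \<le> 1"
  shows "V * c\<^sup>2 \<le> \<bar>M\<bar>"
proof (cases "c = 0")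
  case False
  have "V * c\<^sup>2 \<le> \<bar>V\<bar> * c\<^sup>2"
    by (intro mult_right_mono) auto
  also have "\<dots> \<le> \<bar>V\<bar>"
    using assms(2) by (intro mult_left_le) auto
  also have "\<dots> \<le> \<bar>M\<bar>"
    using assms(1)[OF False] by linarith
  finally show ?thesis .
qed simp

lemma norm_grad_sq_bounded:
  assumes "smooth_fun f" "bounded \<Omega>"
  obtains B where "\<And>x. x \<in> \<Omega> \<Longrightarrow> (norm (grad f x))\<^sup>2 \<le> B"
proof -
  have "continuous_on (closure \<Omega>) (\<lambda>x. (norm (grad f x))\<^sup>2)"
    using assms(1) by (intro continuous_intros continuous_on_grad[of 0]) (simp add: smooth_fun_iff_smooth_upto)
  then have "bounded ((\<lambda>x. (norm (grad f x))\<^sup>2) ` closure \<Omega>)"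
    using assms(2) by (intro compact_imp_bounded compact_continuous_image) (auto simp: compact_closure)
  then obtain B where "\<forall>y\<in>(\<lambda>x. (norm (grad f x))\<^sup>2) ` closure \<Omega>. norm y \<le> B"
    by (auto simp: bounded_iff)
  then show ?thesis
    using closure_subset[of \<Omega>] by (intro that[of B]) force
qed

lemma ims_error_bounded:
  fixes c1 c2 V1 V2 :: "'a::euclidean_space \<Rightarrow> real"
  assumes "bounded \<Omega>" "smooth_fun c1" "smooth_fun c2" "\<And>x. (c1 x)\<^sup>2 + (c2 x)\<^sup>2 = 1"
    and "AE x in lebesgue. x \<in> \<Omega> \<and> c2 x \<noteq> 0 \<longrightarrow> \<bar>V1 x\<bar> \<le> M1"
    and "AE x in lebesgue. x \<in> \<Omega> \<and> c1 x \<noteq> 0 \<longrightarrow> \<bar>V2 x\<bar> \<le> M2"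
  obtains K where "K \<ge> 0" "AE x in lebesgue. x \<in> \<Omega> \<longrightarrow> ims_error c1 c2 V1 V2 x \<le> K"
proof -
  obtain B1 B2 where B1: "\<And>x. x \<in> \<Omega> \<Longrightarrow> (norm (grad c1 x))\<^sup>2 \<le> B1"
    and B2: "\<And>x. x \<in> \<Omega> \<Longrightarrow> (norm (grad c2 x))\<^sup>2 \<le> B2"
    using norm_grad_sq_bounded[OF assms(2,1)] norm_grad_sq_bounded[OF assms(3,1)] by metis
  have c_sq_le: "(c1 x)\<^sup>2 \<le> 1" "(c2 x)\<^sup>2 \<le> 1" for x
    using assms(4)[of x] zero_le_power2[of "c1 x"] zero_le_power2[of "c2 x"] by linarith+
  show ?thesis
  proof (rule that[of "\<bar>M1\<bar> + \<bar>M2\<bar> + \<bar>B1\<bar> + \<bar>B2\<bar>"])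
    show "AE x in lebesgue. x \<in> \<Omega> \<longrightarrow> ims_error c1 c2 V1 V2 x \<le> \<bar>M1\<bar> + \<bar>M2\<bar> + \<bar>B1\<bar> + \<bar>B2\<bar>"
      using eventually_conj[OF assms(5,6)]
    proof (rule eventually_mono, intro impI)
      fix x
      assume bounds: "(x \<in> \<Omega> \<and> c2 x \<noteq> 0 \<longrightarrow> \<bar>V1 x\<bar> \<le> M1) \<and> (x \<in> \<Omega> \<and> c1 x \<noteq> 0 \<longrightarrow> \<bar>V2 x\<bar> \<le> M2)"
        and "x \<in> \<Omega>"
      then show "ims_error c1 c2 V1 V2 x \<le> \<bar>M1\<bar> + \<bar>M2\<bar> + \<bar>B1\<bar> + \<bar>B2\<bar>"
        using mult_sq_le_abs_bound[of "c2 x" "V1 x" M1] mult_sq_le_abs_bound[of "c1 x" "V2 x" M2]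
          c_sq_le B1[of x] B2[of x] unfolding ims_error_def by fastforce
    qed
  qed simp
qed

lemma lambda1_add_gt_MInf_localized:
  fixes c1 c2 V1 V2 :: "'a::euclidean_space \<Rightarrow> real"
  assumes "bounded \<Omega>" "smooth_fun c1" "smooth_fun c2" "\<And>x. (c1 x)\<^sup>2 + (c2 x)\<^sup>2 = 1"
    and "L1_loc \<Omega> V1" "L1_loc \<Omega> V2" "lambda1 \<Omega> V1 > -\<infinity>" "lambda1 \<Omega> V2 > -\<infinity>"
    and "AE x in lebesgue. x \<in> \<Omega> \<and> c2 x \<noteq> 0 \<longrightarrow> \<bar>V1 x\<bar> \<le> M1"
    and "AE x in lebesgue. x \<in> \<Omega> \<and> c1 x \<noteq> 0 \<longrightarrow> \<bar>V2 x\<bar> \<le> M2"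
  shows "lambda1 \<Omega> (\<lambda>x. V1 x + V2 x) > -\<infinity>"
proof -
  obtain L1 L2 where
    L1: "L1 \<le> 0" "\<And>v. test_fun \<Omega> v \<Longrightarrow> L1 * L2_sq \<Omega> v \<le> energy \<Omega> V1 v" and
    L2: "L2 \<le> 0" "\<And>v. test_fun \<Omega> v \<Longrightarrow> L2 * L2_sq \<Omega> v \<le> energy \<Omega> V2 v"
    using assms(7,8) unfolding lambda1_gt_MInf_iff by blast
  obtain K where K: "K \<ge> 0" "AE x in lebesgue. x \<in> \<Omega> \<longrightarrow> ims_error c1 c2 V1 V2 x \<le> K"
    by (rule ims_error_bounded[OF assms(1-4,9,10)])
  have c_sq_le: "(c1 x)\<^sup>2 \<le> 1" "(c2 x)\<^sup>2 \<le> 1" for x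
    using assms(4)[of x] zero_le_power2[of "c1 x"] zero_le_power2[of "c2 x"] by linarith+
  have "(L1 + L2 - K) * L2_sq \<Omega> u \<le> energy \<Omega> (\<lambda>x. V1 x + V2 x) u" if u: "test_fun \<Omega> u" for u
  proof -
    have "L1 * L2_sq \<Omega> u \<le> energy \<Omega> V1 (\<lambda>x. c1 x * u x)"
      using L1 u assms(2) c_sq_le(1) by (rule energy_mult_lower_bound)
    moreover have "L2 * L2_sq \<Omega> u \<le> energy \<Omega> V2 (\<lambda>x. c2 x * u x)"
      using L2 u assms(3) c_sq_le(2) by (rule energy_mult_lower_bound)
    moreover have "(LINT x:\<Omega>|lebesgue. ims_error c1 c2 V1 V2 x * (u x)\<^sup>2) \<le> K * L2_sq \<Omega> u"
      using ims_error_integrable[OF assms(2,3) u assms(5,6)] u K(2) by (rule set_integral_weight_le_L2_sq)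
    ultimately show ?thesis
      unfolding energy_localization[OF assms(2-4) u assms(5,6)] by (simp add: algebra_simps)
  qed
  moreover have "L1 + L2 - K \<le> 0"
    using L1(1) L2(1) K(1) by simp
  ultimately show ?thesis
    unfolding lambda1_gt_MInf_iff by blast
qed

theorem lemma4p1:
  fixes \<Omega> S1 S2 :: "'a::euclidean_space set" and V1 V2 :: "'a \<Rightarrow> real"
  assumes "open \<Omega>" and "connected \<Omega>" and "bounded \<Omega>"
    and "compact S1" and "compact S2" and "S1 \<subseteq> closure \<Omega>" and "S2 \<subseteq> closure \<Omega>"
    and "S1 \<inter> S2 = {}"
    and "L1_loc \<Omega> V1" and "Linf_loc_on \<Omega> (closure \<Omega> - S1) V1"
    and "L1_loc \<Omega> V2" and "Linf_loc_on \<Omega> (closure \<Omega> - S2) V2"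
    and "lambda1 \<Omega> V1 > -\<infinity>" and "lambda1 \<Omega> V2 > -\<infinity>"
  shows "lambda1 \<Omega> (\<lambda>x. V1 x + V2 x) > -\<infinity>"
proof -
  obtain c1 c2 :: "'a \<Rightarrow> real" and N1 N2 where
    c: "smooth_fun c1" "smooth_fun c2" "\<And>x. (c1 x)\<^sup>2 + (c2 x)\<^sup>2 = 1"
      "open N1" "S1 \<subseteq> N1" "\<And>x. x \<in> N1 \<Longrightarrow> c2 x = 0"
      "open N2" "S2 \<subseteq> N2" "\<And>x. x \<in> N2 \<Longrightarrow> c1 x = 0"
    by (rule smooth_cutoff_pair[OF assms(4,5,8)]) blast
  have "compact (closure \<Omega>)"
    using assms(3) by (simp add: compact_closure)
  then have compact: "compact (closure \<Omega> - N1)" "compact (closure \<Omega> - N2)"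
    using c(4,7) unfolding Diff_eq by (auto intro: compact_Int_closed)
  obtain M1 where M1: "AE x in lebesgue. x \<in> (closure \<Omega> - N1) \<inter> \<Omega> \<longrightarrow> \<bar>V1 x\<bar> \<le> M1"
    by (rule Linf_loc_on_compact_bound[OF assms(10) compact(1)]) (use c(5) in blast)
  obtain M2 where M2: "AE x in lebesgue. x \<in> (closure \<Omega> - N2) \<inter> \<Omega> \<longrightarrow> \<bar>V2 x\<bar> \<le> M2"
    by (rule Linf_loc_on_compact_bound[OF assms(12) compact(2)]) (use c(8) in blast)
  have "AE x in lebesgue. x \<in> \<Omega> \<and> c2 x \<noteq> 0 \<longrightarrow> \<bar>V1 x\<bar> \<le> M1"
    using M1 by (rule eventually_mono) (use c(6) closure_subset[of \<Omega>] in blast)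
  moreover have "AE x in lebesgue. x \<in> \<Omega> \<and> c1 x \<noteq> 0 \<longrightarrow> \<bar>V2 x\<bar> \<le> M2"
    using M2 by (rule eventually_mono) (use c(9) closure_subset[of \<Omega>] in blast)
  ultimately show ?thesis
    by (rule lambda1_add_gt_MInf_localized[OF assms(3) c(1-3) assms(9,11,13,14)])
qed

end
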